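(* Let $q \geq 1$ and let $k$ be a positive integer with $k < n$. Let $\boldsymbol{B}$ be a dictionary as described in the context, and assume that every signal $\boldsymbol{y}\in\mathbb{R}^D$ that admits a $k$-block-sparse representation admits a unique one. If $$\Big(k\sqrt{\frac{1+\sigma_q}{1+\epsilon_q}} + k - 1\Big)\mu_S < \frac{1-\epsilon_q}{1+\epsilon_q},$$ then for every $\Lambda_k\subseteq\{1,\dots,n\}$ with $|\Lambda_k|=k$ and every $\boldsymbol{y}\in\bigoplus_{i\in\Lambda_k}\mathcal{S}_i$, every optimal solution $\boldsymbol{c}^*$ of $P_{\ell_q/\ell_1}(\boldsymbol{y})$ satisfies $\boldsymbol{c}^*[i]=\boldsymbol{0}$ for all $i\notin\Lambda_k$; i.e. the solution of $P_{\ell_q/\ell_1}$ is equivalent to that of $P_{\ell_q/\ell_0}$.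
   Context: $\boldsymbol{B} = [\boldsymbol{B}[1]\ \cdots\ \boldsymbol{B}[n]] \in \mathbb{R}^{D\times N}$ has unit-Euclidean-norm columns, blocks $\boldsymbol{B}[i] \in \mathbb{R}^{D\times m_i}$ (possibly with linearly dependent columns); $\mathcal{S}_i = \operatorname{span}(\boldsymbol{B}[i])$ has dimension $d_i$, and $\mathcal{S}_i\cap\mathcal{S}_j = \{0\}$ for $i\ne j$. Vectors $\boldsymbol{c}\in\mathbb{R}^N$ are written $(\boldsymbol{c}[1];\dots;\boldsymbol{c}[n])$, $\boldsymbol{c}[i]\in\mathbb{R}^{m_i}$. A $k$-block-sparse representation of $\boldsymbol{y}$ is $\boldsymbol{y}=\sum_{i\in\Lambda}\boldsymbol{s}_i$ with $|\Lambda|\le k$, $\boldsymbol{s}_i\in\mathcal{S}_i\setminus\{0\}$; uniqueness means any two have the same $\Lambda$ and the same $\boldsymbol{s}_i$. $P_{\ell_q/\ell_1}(\boldsymbol{y})$: $\min \sum_i \|\boldsymbol{c}[i]\|_q$ s.t. $\boldsymbol{y}=\boldsymbol{B}\boldsymbol{c}$; $P_{\ell_q/\ell_0}(\boldsymbol{y})$: minimize the number of nonzero blocks $\boldsymbol{c}[i]$ s.t. $\boldsymbol{y}=\boldsymbol{B}\boldsymbol{c}$. Subspace coherence: $\mu(\mathcal{S}_i,\mathcal{S}_j)=\max_{0\ne\boldsymbol{x}\in\mathcal{S}_i,\,0\ne\boldsymbol{z}\in\mathcal{S}_j}\frac{|\boldsymbol{x}^\top\boldsymbol{z}|}{\|\boldsymbol{x}\|_2\|\boldsymbol{z}\|_2}$;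 mutual subspace coherence $\mu_S=\max_{i\ne j}\mu(\mathcal{S}_i,\mathcal{S}_j)$. $\epsilon_q$: the smallest constant such that for every $i$ there is a full column-rank submatrix $\bar{\boldsymbol{B}}[i]\in\mathbb{R}^{D\times d_i}$ of $\boldsymbol{B}[i]$ with $(1-\epsilon_q)\|\bar{\boldsymbol{c}}\|_q^2 \le \|\bar{\boldsymbol{B}}[i]\bar{\boldsymbol{c}}\|_2^2 \le (1+\epsilon_q)\|\bar{\boldsymbol{c}}\|_q^2$ for all $\bar{\boldsymbol{c}}\in\mathbb{R}^{d_i}$. $\sigma_q$: the smallest constant such that $\|\boldsymbol{B}[i]\boldsymbol{c}[i]\|_2^2\le(1+\sigma_q)\|\boldsymbol{c}[i]\|_q^2$ for all $i$ and all $\boldsymbol{c}[i]$. *)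

theory Defs
  imports "HOL-Analysis.Analysis"
begin

text \<open>Block dictionary: blocks are indexed by i < n, block i has columns
  B i j (j < m i) in R^D (type real ^ 'd). Coefficient vectors are
  c :: nat \<Rightarrow> nat \<Rightarrow> real with c i j the j-th entry of block c[i].\<close>

definition lq_norm :: "real \<Rightarrow> nat set \<Rightarrow> (nat \<Rightarrow> real) \<Rightarrow> real" where
  "lq_norm q J c = (\<Sum>j\<in>J. \<bar>c j\<bar> powr q) powr (1 / q)"

definition block_span :: "(nat \<Rightarrow> nat \<Rightarrow> real ^ 'd) \<Rightarrow> (nat \<Rightarrow> nat) \<Rightarrow> nat \<Rightarrow> (real ^ 'd) set" where
  "block_span B m i = span ((B i) ` {..<m i})"

definition dict_apply :: "nat \<Rightarrow> (nat \<Rightarrow> nat) \<Rightarrow> (nat \<Rightarrow> nat \<Rightarrow> real ^ 'd) \<Rightarrow> (nat \<Rightarrow> nat \<Rightarrow> real) \<Rightarrow> real ^ 'd" where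
  "dict_apply n m B c = (\<Sum>i<n. \<Sum>j<m i. c i j *\<^sub>R B i j)"

definition mutual_subspace_coherence :: "nat \<Rightarrow> (nat \<Rightarrow> nat) \<Rightarrow> (nat \<Rightarrow> nat \<Rightarrow> real ^ 'd) \<Rightarrow> real" where
  "mutual_subspace_coherence n m B =
     Sup {\<bar>x \<bullet> z\<bar> / (norm x * norm z) | i j x z.
            i < n \<and> j < n \<and> i \<noteq> j \<and> x \<in> block_span B m i \<and> z \<in> block_span B m j
            \<and> x \<noteq> 0 \<and> z \<noteq> 0}"

definition sigma_q :: "real \<Rightarrow> nat \<Rightarrow> (nat \<Rightarrow> nat) \<Rightarrow> (nat \<Rightarrow> nat \<Rightarrow> real ^ 'd) \<Rightarrow> real" where
  "sigma_q q n m B =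
     Inf {s. \<forall>i<n. \<forall>c :: nat \<Rightarrow> real.
            (norm (\<Sum>j<m i. c j *\<^sub>R B i j))\<^sup>2 \<le> (1 + s) * (lq_norm q {..<m i} c)\<^sup>2}"

definition epsilon_q :: "real \<Rightarrow> nat \<Rightarrow> (nat \<Rightarrow> nat) \<Rightarrow> (nat \<Rightarrow> nat \<Rightarrow> real ^ 'd) \<Rightarrow> real" where
  "epsilon_q q n m B =
     Inf {e. \<forall>i<n. \<exists>J. J \<subseteq> {..<m i} \<and> card J = dim (block_span B m i)
            \<and> (\<forall>c :: nat \<Rightarrow> real. (\<Sum>j\<in>J. c j *\<^sub>R B i j) = 0 \<longrightarrow> (\<forall>j\<in>J. c j = 0))
            \<and> (\<forall>c :: nat \<Rightarrow> real.
                 (1 - e) * (lq_norm q J c)\<^sup>2 \<le> (norm (\<Sum>j\<in>J. c j *\<^sub>R B i j))\<^sup>2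
               \<and> (norm (\<Sum>j\<in>J. c j *\<^sub>R B i j))\<^sup>2 \<le> (1 + e) * (lq_norm q J c)\<^sup>2)}"

definition kbs_rep :: "nat \<Rightarrow> (nat \<Rightarrow> nat) \<Rightarrow> (nat \<Rightarrow> nat \<Rightarrow> real ^ 'd) \<Rightarrow> nat \<Rightarrow> real ^ 'd
     \<Rightarrow> nat set \<Rightarrow> (nat \<Rightarrow> real ^ 'd) \<Rightarrow> bool" where
  "kbs_rep n m B k y \<Lambda> s \<longleftrightarrow> \<Lambda> \<subseteq> {..<n} \<and> card \<Lambda> \<le> k
     \<and> (\<forall>i\<in>\<Lambda>. s i \<in> block_span B m i \<and> s i \<noteq> 0) \<and> y = (\<Sum>i\<in>\<Lambda>. s i)"

definition unique_kbs :: "nat \<Rightarrow> (nat \<Rightarrow> nat) \<Rightarrow> (nat \<Rightarrow> nat \<Rightarrow> real ^ 'd) \<Rightarrow> nat \<Rightarrow> bool" where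
  "unique_kbs n m B k \<longleftrightarrow> (\<forall>y \<Lambda> s \<Lambda>' s'. kbs_rep n m B k y \<Lambda> s \<and> kbs_rep n m B k y \<Lambda>' s'
      \<longrightarrow> \<Lambda> = \<Lambda>' \<and> (\<forall>i\<in>\<Lambda>. s i = s' i))"

definition lq_l1_optimal :: "real \<Rightarrow> nat \<Rightarrow> (nat \<Rightarrow> nat) \<Rightarrow> (nat \<Rightarrow> nat \<Rightarrow> real ^ 'd) \<Rightarrow> real ^ 'd
     \<Rightarrow> (nat \<Rightarrow> nat \<Rightarrow> real) \<Rightarrow> bool" where
  "lq_l1_optimal q n m B y c \<longleftrightarrow> dict_apply n m B c = y \<and>
     (\<forall>c'. dict_apply n m B c' = y \<longrightarrow>
        (\<Sum>i<n. lq_norm q {..<m i} (c i)) \<le> (\<Sum>i<n. lq_norm q {..<m i} (c' i)))"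

end

theory Submission
  imports Defs
begin

text \<open>Let c be an optimal solution of P_lq/l1(y) with y = \<Sum>_{i\<in>\<Lambda>} s_i, and let C be the cost
  of the blocks of c outside \<Lambda>. The residuals r_i = s_i - B[i]c[i], i \<in> \<Lambda>, sum to the
  off-support part \<Sum>_{j\<notin>\<Lambda>} B[j]c[j]. Pairing r_i with this identity and bounding every cross
  term by the mutual subspace coherence \<mu> gives (1 - (k-1)\<mu>) \<Sum>\<parallel>r_i\<parallel> \<le> k\<mu>\<surd>(1+\<sigma>_q) C.
  Conversely, re-expanding each r_i on the well-conditioned columns supplied by \<epsilon>_q and
  deleting the off-support blocks yields a feasible competitor, so optimality forces
  \<surd>(1-\<epsilon>) C \<le> \<Sum>\<parallel>r_i\<parallel>. Under the coherence condition the two bounds are compatible only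
  for C = 0. As \<epsilon>_q is merely an infimum, a constant \<epsilon> slightly above it is used.\<close>

lemma lq_norm_nonneg: "0 \<le> lq_norm q J c"
  by (simp add: lq_norm_def)

lemma lq_norm_powr: "q > 0 \<Longrightarrow> lq_norm q J c powr q = (\<Sum>j\<in>J. \<bar>c j\<bar> powr q)"
  by (simp add: lq_norm_def powr_powr sum_nonneg)

lemma lq_norm_cong: "(\<And>j. j \<in> J \<Longrightarrow> c j = d j) \<Longrightarrow> lq_norm q J c = lq_norm q J d"
  unfolding lq_norm_def by (metis (no_types, lifting) sum.cong)

lemma abs_le_lq_norm:
  assumes "finite J" "j \<in> J" "q > 0"
  shows "\<bar>c j\<bar> \<le> lq_norm q J c"
proof -
  have "\<bar>c j\<bar> = (\<bar>c j\<bar> powr q) powr (1 / q)"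
    using assms by (simp add: powr_powr)
  also have "\<dots> \<le> (\<Sum>l\<in>J. \<bar>c l\<bar> powr q) powr (1 / q)"
    using assms by (intro powr_mono2 member_le_sum) auto
  finally show ?thesis by (simp add: lq_norm_def)
qed

lemma lq_norm_eq_0D: "finite J \<Longrightarrow> q > 0 \<Longrightarrow> lq_norm q J c = 0 \<Longrightarrow> j \<in> J \<Longrightarrow> c j = 0"
  using abs_le_lq_norm[of J j q c] by simp

lemma lq_norm_unit_vector:
  assumes "finite J" "j \<in> J" "q > 0"
  shows "lq_norm q J (\<lambda>l. if l = j then 1 else 0) = 1"
proof -
  have "(\<Sum>l\<in>J. \<bar>if l = j then 1 else 0 :: real\<bar> powr q) = (\<Sum>l\<in>J. if l = j then 1 else 0)"
    by (rule sum.cong) auto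
  with assms show ?thesis by (simp add: lq_norm_def)
qed

lemma lq_norm_extend_zero:
  assumes "finite K" "J \<subseteq> K"
  shows "lq_norm q K (\<lambda>j. if j \<in> J then c j else 0) = lq_norm q J c"
proof -
  have "(\<Sum>j\<in>K. \<bar>if j \<in> J then c j else 0\<bar> powr q) = (\<Sum>j\<in>J. \<bar>c j\<bar> powr q)"
    using assms by (intro sum.mono_neutral_cong_right) auto
  then show ?thesis by (simp add: lq_norm_def)
qed

lemma norm_sum_scaleR_le_card_lq_norm:
  fixes v :: "nat \<Rightarrow> 'a::real_normed_vector"
  assumes "finite J" "q > 0" "\<And>j. j \<in> J \<Longrightarrow> norm (v j) \<le> 1"
  shows "norm (\<Sum>j\<in>J. c j *\<^sub>R v j) \<le> real (card J) * lq_norm q J c"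
proof -
  have "norm (\<Sum>j\<in>J. c j *\<^sub>R v j) \<le> (\<Sum>j\<in>J. \<bar>c j\<bar> * norm (v j))"
    using norm_sum[of "\<lambda>j. c j *\<^sub>R v j" J] by simp
  also have "\<dots> \<le> (\<Sum>j\<in>J. lq_norm q J c)"
  proof (rule sum_mono)
    fix j assume "j \<in> J"
    then show "\<bar>c j\<bar> * norm (v j) \<le> lq_norm q J c"
      using assms abs_le_lq_norm[of J j q c] mult_left_mono[of "norm (v j)" 1 "\<bar>c j\<bar>"] by auto
  qed
  finally show ?thesis by simp
qed

lemma powr_convex_comb_le:
  fixes u v s t q :: real
  assumes "q \<ge> 1" "0 \<le> u" "0 \<le> v" "0 \<le> s" "0 \<le> t" "s + t = 1"
  shows "(s * u + t * v) powr q \<le> s * u powr q + t * v powr q"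
proof -
  have scale: "(r * w) powr q \<le> r * w powr q" if "0 \<le> r" "r \<le> 1" "0 \<le> w" for r w :: real
  proof -
    have "r powr q \<le> r powr 1" if "r \<noteq> 0"
      using that \<open>0 \<le> r\<close> \<open>r \<le> 1\<close> assms(1) by (intro powr_mono') auto
    then have "r powr q \<le> r" using \<open>0 \<le> r\<close> by (cases "r = 0") auto
    then show ?thesis
      using that by (simp add: powr_mult mult_right_mono)
  qed
  consider "0 < u" "0 < v" | "u = 0" | "v = 0"
    using assms by linarith
  then show ?thesis
  proof cases
    case 1
    then show ?thesis
      using convex_onD[OF powr_convex[OF assms(1)], of t u v] assms
      by (simp add: eq_diff_eq[symmetric])
  qed (use scale[of t v] scale[of s u] assms in auto)
qed

text \<open>Writing \<open>\<bar>x\<bar> + \<bar>y\<bar>\<close> as \<open>a + b\<close> times a convex combination of \<open>\<bar>x\<bar> / a\<close> and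
  \<open>\<bar>y\<bar> / b\<close> is the heart of Minkowski's inequality.\<close>
lemma abs_add_powr_le_mixture:
  fixes x y a b q :: real
  assumes "q \<ge> 1" "0 < a" "0 < b"
  shows "\<bar>x + y\<bar> powr q
           \<le> (a + b) powr q * (a / (a + b) * (\<bar>x\<bar> / a) powr q + b / (a + b) * (\<bar>y\<bar> / b) powr q)"
proof -
  have split: "\<bar>x\<bar> + \<bar>y\<bar> = (a + b) * (a / (a + b) * (\<bar>x\<bar> / a) + b / (a + b) * (\<bar>y\<bar> / b))"
    using assms by (simp add: add_divide_distrib[symmetric])
  have "\<bar>x + y\<bar> powr q \<le> (\<bar>x\<bar> + \<bar>y\<bar>) powr q"
    using assms by (intro powr_mono2) auto
  also have "\<dots> = (a + b) powr q * (a / (a + b) * (\<bar>x\<bar> / a) + b / (a + b) * (\<bar>y\<bar> / b)) powr q"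
    unfolding split using assms by (subst powr_mult) auto
  also have "\<dots> \<le> (a + b) powr q * (a / (a + b) * (\<bar>x\<bar> / a) powr q + b / (a + b) * (\<bar>y\<bar> / b) powr q)"
    using assms by (intro mult_left_mono powr_convex_comb_le) (auto simp: add_divide_distrib[symmetric])
  finally show ?thesis .
qed

lemma lq_norm_triangle:
  assumes J: "finite J" and q: "q \<ge> 1"
  shows "lq_norm q J (\<lambda>j. c j + d j) \<le> lq_norm q J c + lq_norm q J d"
proof -
  define a b where "a = lq_norm q J c" and "b = lq_norm q J d"
  have "a \<ge> 0" "b \<ge> 0" by (simp_all add: a_def b_def lq_norm_nonneg)
  consider "a = 0" | "b = 0" | "0 < a" "0 < b"
    using \<open>a \<ge> 0\<close> \<open>b \<ge> 0\<close> by linarith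
  then show ?thesis
  proof cases
    case 1
    then have "lq_norm q J (\<lambda>j. c j + d j) = b"
      using J q lq_norm_eq_0D[of J q c] unfolding a_def b_def by (intro lq_norm_cong) auto
    then show ?thesis using 1 by (simp add: a_def b_def)
  next
    case 2
    then have "lq_norm q J (\<lambda>j. c j + d j) = a"
      using J q lq_norm_eq_0D[of J q d] unfolding a_def b_def by (intro lq_norm_cong) auto
    then show ?thesis using 2 by (simp add: a_def b_def)
  next
    case 3
    have normalized: "(\<Sum>j\<in>J. (\<bar>f j\<bar> / lq_norm q J f) powr q) = 1" if "0 < lq_norm q J f" for f
    proof -
      have "0 < lq_norm q J f powr q" using that by simp
      then show ?thesis
        using q lq_norm_powr[of q J f] by (simp add: powr_divide sum_divide_distrib[symmetric])
    qed
    have "(\<Sum>j\<in>J. \<bar>c j + d j\<bar> powr q)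
        \<le> (\<Sum>j\<in>J. (a + b) powr q * (a / (a + b) * (\<bar>c j\<bar> / a) powr q + b / (a + b) * (\<bar>d j\<bar> / b) powr q))"
      using 3 q by (intro sum_mono abs_add_powr_le_mixture) auto
    also have "\<dots> = (a + b) powr q * (a / (a + b) * (\<Sum>j\<in>J. (\<bar>c j\<bar> / a) powr q)
                                     + b / (a + b) * (\<Sum>j\<in>J. (\<bar>d j\<bar> / b) powr q))"
      by (simp add: sum_distrib_left sum.distrib[symmetric])
    also have "\<dots> = (a + b) powr q"
      using 3 normalized[of c] normalized[of d] by (simp add: a_def b_def add_divide_distrib[symmetric])
    finally have "lq_norm q J (\<lambda>j. c j + d j) powr q \<le> (a + b) powr q"
      using q lq_norm_powr[of q J] by simp
    then show ?thesis
      using powr_less_mono2[of q "a + b" "lq_norm q J (\<lambda>j. c j + d j)"] 3 q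
      unfolding a_def b_def by linarith
  qed
qed

lemma coefficients_unique_iff_independent_image:
  fixes v :: "'i \<Rightarrow> 'a::euclidean_space"
  assumes "finite U"
  shows "(\<forall>c. (\<Sum>j\<in>U. c j *\<^sub>R v j) = 0 \<longrightarrow> (\<forall>j\<in>U. c j = 0))
           \<longleftrightarrow> inj_on v U \<and> independent (v ` U)"
proof
  assume unique: "\<forall>c. (\<Sum>j\<in>U. c j *\<^sub>R v j) = 0 \<longrightarrow> (\<forall>j\<in>U. c j = 0)"
  show "inj_on v U \<and> independent (v ` U)"
  proof
    show inj: "inj_on v U"
    proof (rule inj_onI, rule ccontr)
      fix j1 j2 assume j: "j1 \<in> U" "j2 \<in> U" "v j1 = v j2" "j1 \<noteq> j2"
      define c where "c l = (if l = j1 then 1 else if l = j2 then -1 else 0 :: real)" for l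
      have "(\<Sum>l\<in>U. c l *\<^sub>R v l) = (\<Sum>l\<in>{j1, j2}. c l *\<^sub>R v l)"
        using j assms by (intro sum.mono_neutral_right) (auto simp: c_def)
      also have "\<dots> = 0" using j by (simp add: c_def)
      finally show False using unique j by (force simp: c_def)
    qed
    show "independent (v ` U)"
      unfolding independent_explicit
    proof (intro conjI allI impI ballI)
      show "finite (v ` U)" using assms by simp
      fix c x assume c: "(\<Sum>x\<in>v ` U. c x *\<^sub>R x) = 0" and x: "x \<in> v ` U"
      have "(\<Sum>j\<in>U. c (v j) *\<^sub>R v j) = 0" using c inj by (simp add: sum.reindex)
      then show "c x = 0" using unique x by auto
    qed
  qed
next
  assume "inj_on v U \<and> independent (v ` U)"
  then have inj: "inj_on v U" and indep: "independent (v ` U)" by auto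
  show "\<forall>c. (\<Sum>j\<in>U. c j *\<^sub>R v j) = 0 \<longrightarrow> (\<forall>j\<in>U. c j = 0)"
  proof (intro allI impI ballI)
    fix c j assume c: "(\<Sum>j\<in>U. c j *\<^sub>R v j) = 0" and j: "j \<in> U"
    have "(\<Sum>x\<in>v ` U. c (inv_into U v x) *\<^sub>R x) = 0"
      using c inj by (simp add: sum.reindex)
    then have "c (inv_into U v (v j)) = 0"
      using indep j unfolding independent_explicit by (metis imageI)
    then show "c j = 0" using inj j by simp
  qed
qed

lemma exists_independent_index_subset:
  fixes v :: "'i \<Rightarrow> 'a::euclidean_space"
  assumes "finite K"
  obtains U where "U \<subseteq> K" "card U = dim (span (v ` K))"
    "\<forall>c. (\<Sum>j\<in>U. c j *\<^sub>R v j) = 0 \<longrightarrow> (\<forall>j\<in>U. c j = 0)"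
proof -
  obtain W where W: "W \<subseteq> v ` K" "independent W" "v ` K \<subseteq> span W" "card W = dim (v ` K)"
    using basis_exists by blast
  then obtain U where U: "U \<subseteq> K" "inj_on v U" "W = v ` U"
    unfolding subset_image_inj by blast
  have "finite U" using U(1) assms finite_subset by blast
  moreover have "card U = dim (span (v ` K))"
    using U W(4) by (simp add: card_image dim_span)
  ultimately show ?thesis
    using that U W(2) coefficients_unique_iff_independent_image by blast
qed

lemma spanned_by_independent_index_subset:
  fixes v :: "'i \<Rightarrow> 'a::euclidean_space"
  assumes "finite U" "U \<subseteq> K" "card U = dim (span (v ` K))"
    and "\<forall>c. (\<Sum>j\<in>U. c j *\<^sub>R v j) = 0 \<longrightarrow> (\<forall>j\<in>U. c j = 0)"
    and "x \<in> span (v ` K)"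
  obtains g where "(\<Sum>j\<in>U. g j *\<^sub>R v j) = x"
proof -
  have inj: "inj_on v U" and indep: "independent (v ` U)"
    using assms(1,4) coefficients_unique_iff_independent_image by blast+
  have "span (v ` K) \<subseteq> span (v ` U)"
  proof (rule card_ge_dim_independent[OF _ indep])
    show "v ` U \<subseteq> span (v ` K)" using assms(2) by (auto intro: span_base)
    show "dim (span (v ` K)) \<le> card (v ` U)" using assms(3) inj by (simp add: card_image)
  qed
  then obtain u where "(\<Sum>x\<in>v ` U. u x *\<^sub>R x) = x"
    using assms(1,5) span_finite[of "v ` U"] by auto
  then have "(\<Sum>j\<in>U. u (v j) *\<^sub>R v j) = x"
    using inj by (simp add: sum.reindex)
  then show ?thesis by (rule that)
qed

lemma abs_inner_sum_le:
  fixes x :: "'a::real_inner"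
  assumes "\<And>j. j \<in> A \<Longrightarrow> \<bar>x \<bullet> y j\<bar> \<le> \<mu> * norm x * norm (y j)"
  shows "\<bar>x \<bullet> (\<Sum>j\<in>A. y j)\<bar> \<le> \<mu> * norm x * (\<Sum>j\<in>A. norm (y j))"
proof -
  have "\<bar>x \<bullet> (\<Sum>j\<in>A. y j)\<bar> \<le> (\<Sum>j\<in>A. \<bar>x \<bullet> y j\<bar>)"
    by (simp add: inner_sum_right sum_abs)
  also have "\<dots> \<le> (\<Sum>j\<in>A. \<mu> * norm x * norm (y j))"
    by (rule sum_mono) (rule assms)
  finally show ?thesis by (simp add: sum_distrib_left)
qed

text \<open>If the \<open>s i\<close> (\<open>i \<in> \<Lambda>\<close>) sum to the same vector as the \<open>t j\<close> (\<open>j \<in> \<Gamma>\<close>), then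
  \<open>\<parallel>s i\<parallel>\<^sup>2 = s i \<bullet> (\<Sum>t) - s i \<bullet> (\<Sum>\<^bsub>l \<noteq> i\<^esub> s l)\<close>, and both inner products are small by coherence.\<close>
lemma norm_le_coherence_leakage:
  fixes s t :: "'i \<Rightarrow> 'a::real_inner"
  assumes fin: "finite \<Lambda>" and i: "i \<in> \<Lambda>" and eq: "(\<Sum>l\<in>\<Lambda>. s l) = (\<Sum>j\<in>\<Gamma>. t j)"
    and \<mu>: "0 \<le> \<mu>"
    and ss: "\<And>l. l \<in> \<Lambda> \<Longrightarrow> l \<noteq> i \<Longrightarrow> \<bar>s i \<bullet> s l\<bar> \<le> \<mu> * norm (s i) * norm (s l)"
    and st: "\<And>j. j \<in> \<Gamma> \<Longrightarrow> \<bar>s i \<bullet> t j\<bar> \<le> \<mu> * norm (s i) * norm (t j)"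
  shows "norm (s i) \<le> \<mu> * ((\<Sum>j\<in>\<Gamma>. norm (t j)) + (\<Sum>l\<in>\<Lambda>. norm (s l)) - norm (s i))"
proof -
  define T R where "T = (\<Sum>j\<in>\<Gamma>. norm (t j))" and "R = (\<Sum>l\<in>\<Lambda> - {i}. norm (s l))"
  have R: "R = (\<Sum>l\<in>\<Lambda>. norm (s l)) - norm (s i)"
    using fin i by (simp add: R_def sum_diff1)
  have "(\<Sum>j\<in>\<Gamma>. t j) = s i + (\<Sum>l\<in>\<Lambda> - {i}. s l)"
    using fin i eq by (simp add: sum.remove)
  then have "(norm (s i))\<^sup>2 = s i \<bullet> (\<Sum>j\<in>\<Gamma>. t j) - s i \<bullet> (\<Sum>l\<in>\<Lambda> - {i}. s l)"
    by (simp add: inner_add_right power2_norm_eq_inner)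
  also have "\<dots> \<le> \<mu> * norm (s i) * T + \<mu> * norm (s i) * R"
    using abs_inner_sum_le[of \<Gamma> "s i" t \<mu>] abs_inner_sum_le[of "\<Lambda> - {i}" "s i" s \<mu>] st ss
    unfolding T_def R_def by (smt (verit) DiffE insertCI)
  finally have "norm (s i) * norm (s i) \<le> norm (s i) * (\<mu> * (T + R))"
    by (simp add: power2_eq_square algebra_simps)
  moreover have "0 \<le> \<mu> * (T + R)"
    unfolding T_def R_def using \<mu> by (simp add: sum_nonneg)
  ultimately have "norm (s i) \<le> \<mu> * (T + R)"
    by (cases "norm (s i) = 0") auto
  then show ?thesis unfolding R T_def by (simp add: algebra_simps)
qed

lemma sum_norm_le_coherence_leakage:
  fixes s t :: "'i \<Rightarrow> 'a::real_inner"
  assumes fin: "finite \<Lambda>" and eq: "(\<Sum>i\<in>\<Lambda>. s i) = (\<Sum>j\<in>\<Gamma>. t j)" and \<mu>: "0 \<le> \<mu>"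
    and ss: "\<And>i l. i \<in> \<Lambda> \<Longrightarrow> l \<in> \<Lambda> \<Longrightarrow> i \<noteq> l \<Longrightarrow> \<bar>s i \<bullet> s l\<bar> \<le> \<mu> * norm (s i) * norm (s l)"
    and st: "\<And>i j. i \<in> \<Lambda> \<Longrightarrow> j \<in> \<Gamma> \<Longrightarrow> \<bar>s i \<bullet> t j\<bar> \<le> \<mu> * norm (s i) * norm (t j)"
  shows "(\<Sum>i\<in>\<Lambda>. norm (s i)) * (1 - (real (card \<Lambda>) - 1) * \<mu>)
           \<le> real (card \<Lambda>) * \<mu> * (\<Sum>j\<in>\<Gamma>. norm (t j))"
proof -
  define S T where "S = (\<Sum>i\<in>\<Lambda>. norm (s i))" and "T = (\<Sum>j\<in>\<Gamma>. norm (t j))"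
  have "S \<le> (\<Sum>i\<in>\<Lambda>. \<mu> * (T + S - norm (s i)))"
    unfolding S_def T_def
    by (rule sum_mono, rule norm_le_coherence_leakage[OF fin _ eq \<mu>]) (auto intro: ss st)
  also have "\<dots> = \<mu> * (real (card \<Lambda>) * (T + S) - S)"
    by (simp add: S_def sum_subtractf sum_distrib_left[symmetric])
  finally show ?thesis
    unfolding S_def[symmetric] T_def[symmetric] by (simp add: algebra_simps)
qed

lemma recovery_condition_rearranged:
  fixes e \<sigma> \<mu> k :: real
  assumes e: "0 \<le> e" and \<sigma>: "0 \<le> \<sigma>" and \<mu>: "0 \<le> \<mu>" and k: "1 \<le> k"
    and cond: "(k * sqrt ((1 + \<sigma>) / (1 + e)) + k - 1) * \<mu> < (1 - e) / (1 + e)"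
  shows "0 < 1 - (k - 1) * \<mu>" "k * \<mu> * sqrt (1 + \<sigma>) / (1 - (k - 1) * \<mu>) < sqrt (1 - e)"
proof -
  have "0 \<le> k * sqrt ((1 + \<sigma>) / (1 + e))"
    using e \<sigma> k by simp
  then have "0 \<le> (k * sqrt ((1 + \<sigma>) / (1 + e)) + k - 1) * \<mu>"
    using \<mu> k by (intro mult_nonneg_nonneg) auto
  then have "e < 1" using cond e by (smt (verit) divide_nonpos_pos)
  define a b X where "a = sqrt (1 + e)" and "b = sqrt (1 - e)" and "X = k * \<mu> * sqrt (1 + \<sigma>)"
  have a: "0 < a" "a\<^sup>2 = 1 + e" and b: "0 < b" "b\<^sup>2 = 1 - e" and "b \<le> a"
    using e \<open>e < 1\<close> by (simp_all add: a_def b_def)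
  have "0 \<le> X" using k \<mu> \<sigma> by (simp add: X_def)
  have "sqrt ((1 + \<sigma>) / (1 + e)) = sqrt (1 + \<sigma>) / a"
    by (simp add: a_def real_sqrt_divide)
  then have "X / a + (k - 1) * \<mu> < (1 - e) / (1 + e)"
    using cond by (simp add: X_def algebra_simps)
  then have "X / a + (k - 1) * \<mu> < b\<^sup>2 / a\<^sup>2"
    by (simp only: a(2) b(2))
  then have "a * (X / a + (k - 1) * \<mu>) < a * (b\<^sup>2 / a\<^sup>2)"
    using a(1) by (rule mult_strict_left_mono)
  then have "X + (k - 1) * \<mu> * a < b\<^sup>2 / a"
    using a(1) by (simp add: algebra_simps power2_eq_square)
  moreover have "b\<^sup>2 / a \<le> b"
    using mult_left_mono[OF \<open>b \<le> a\<close>, of b] a(1) b(1) by (simp add: divide_le_eq power2_eq_square)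
  moreover have "(k - 1) * \<mu> * b \<le> (k - 1) * \<mu> * a"
    using \<open>b \<le> a\<close> k \<mu> by (intro mult_left_mono) auto
  ultimately have "X < b * (1 - (k - 1) * \<mu>)" by (simp add: algebra_simps)
  then show pos: "0 < 1 - (k - 1) * \<mu>"
    using \<open>0 \<le> X\<close> b by (smt (verit) zero_less_mult_iff)
  show "X / (1 - (k - 1) * \<mu>) < sqrt (1 - e)"
    using \<open>X < b * (1 - (k - 1) * \<mu>)\<close> pos by (simp add: b_def divide_less_eq)
qed

abbreviation block_apply :: "(nat \<Rightarrow> nat) \<Rightarrow> (nat \<Rightarrow> nat \<Rightarrow> real ^ 'd) \<Rightarrow> nat \<Rightarrow> (nat \<Rightarrow> real) \<Rightarrow> real ^ 'd"
  where "block_apply m B i c \<equiv> \<Sum>j<m i. c j *\<^sub>R B i j"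

lemma block_apply_in_block_span: "block_apply m B i c \<in> block_span B m i"
  unfolding block_span_def by (intro span_sum span_scale span_base) auto

lemma diff_block_apply_in_block_span:
  "x \<in> block_span B m i \<Longrightarrow> x - block_apply m B i c \<in> block_span B m i"
  using block_apply_in_block_span[where c = c] unfolding block_span_def by (blast intro: span_diff)

lemma abs_inner_le_coherence:
  fixes B :: "nat \<Rightarrow> nat \<Rightarrow> real ^ 'd"
  assumes "i < n" "j < n" "i \<noteq> j" "x \<in> block_span B m i" "z \<in> block_span B m j"
  shows "\<bar>x \<bullet> z\<bar> \<le> mutual_subspace_coherence n m B * norm x * norm z"
proof (cases "x = 0 \<or> z = 0")
  case False
  define M where "M = {\<bar>x \<bullet> z\<bar> / (norm x * norm z) | i j x z.
            i < n \<and> j < n \<and> i \<noteq> j \<and> x \<in> block_span B m i \<and> z \<in> block_span B m j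
            \<and> x \<noteq> 0 \<and> z \<noteq> 0}"
  have "bdd_above M"
  proof (rule bdd_aboveI)
    fix r assume "r \<in> M"
    then obtain x' z' :: "real ^ 'd" where "r = \<bar>x' \<bullet> z'\<bar> / (norm x' * norm z')" "x' \<noteq> 0" "z' \<noteq> 0"
      unfolding M_def by blast
    then show "r \<le> 1" using Cauchy_Schwarz_ineq2[of x' z'] by (simp add: divide_le_eq_1)
  qed
  moreover have "\<bar>x \<bullet> z\<bar> / (norm x * norm z) \<in> M"
    unfolding M_def using assms False by blast
  ultimately have "\<bar>x \<bullet> z\<bar> / (norm x * norm z) \<le> mutual_subspace_coherence n m B"
    unfolding mutual_subspace_coherence_def M_def[symmetric] by (rule cSup_upper[rotated])
  then show ?thesis using False by (simp add: divide_le_eq mult.assoc)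
qed auto

lemma mutual_subspace_coherence_nonneg:
  fixes B :: "nat \<Rightarrow> nat \<Rightarrow> real ^ 'd"
  assumes "1 < n" "\<forall>i<n. 0 < m i" "\<forall>i<n. \<forall>j<m i. norm (B i j) = 1"
  shows "0 \<le> mutual_subspace_coherence n m B"
proof -
  have "B 0 0 \<in> block_span B m 0" "B 1 0 \<in> block_span B m 1"
    unfolding block_span_def using assms by (auto intro!: span_base)
  then have "\<bar>B 0 0 \<bullet> B 1 0\<bar> \<le> mutual_subspace_coherence n m B * norm (B 0 0) * norm (B 1 0)"
    using assms by (intro abs_inner_le_coherence) auto
  moreover have "norm (B 0 0) = 1" "norm (B 1 0) = 1" using assms by auto
  ultimately show ?thesis by (metis abs_ge_zero mult.right_neutral order_trans)
qed

lemma power2_norm_sum_columns_le: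
  fixes B :: "nat \<Rightarrow> nat \<Rightarrow> real ^ 'd"
  assumes "\<forall>j<m i. norm (B i j) = 1" "q > 0" "J \<subseteq> {..<m i}"
  shows "(norm (\<Sum>j\<in>J. c j *\<^sub>R B i j))\<^sup>2 \<le> (real (m i))\<^sup>2 * (lq_norm q J c)\<^sup>2"
proof -
  have "finite J" using assms(3) finite_subset by blast
  then have "norm (\<Sum>j\<in>J. c j *\<^sub>R B i j) \<le> real (card J) * lq_norm q J c"
    using assms by (intro norm_sum_scaleR_le_card_lq_norm) auto
  also have "\<dots> \<le> real (m i) * lq_norm q J c"
    using card_mono[OF _ assms(3)] by (intro mult_right_mono) (auto simp: lq_norm_nonneg)
  finally show ?thesis
    by (metis norm_ge_zero power_mono power_mult_distrib)
qed

lemma norm_block_apply_le_sigma_q: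
  fixes B :: "nat \<Rightarrow> nat \<Rightarrow> real ^ 'd"
  assumes unit: "\<forall>i<n. \<forall>j<m i. norm (B i j) = 1" and q: "q > 0" and i: "i < n"
  shows "norm (block_apply m B i c) \<le> sqrt (1 + sigma_q q n m B) * lq_norm q {..<m i} c"
proof -
  define S where "S = {s. \<forall>i<n. \<forall>c :: nat \<Rightarrow> real.
            (norm (block_apply m B i c))\<^sup>2 \<le> (1 + s) * (lq_norm q {..<m i} c)\<^sup>2}"
  have "(\<Sum>i<n. (real (m i))\<^sup>2) \<in> S"
    unfolding S_def
  proof (intro CollectI allI impI)
    fix i c assume "i < n"
    then have "(real (m i))\<^sup>2 \<le> 1 + (\<Sum>i<n. (real (m i))\<^sup>2)"
      using member_le_sum[of i "{..<n}" "\<lambda>i. (real (m i))\<^sup>2"] by simp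
    then show "(norm (block_apply m B i c))\<^sup>2 \<le> (1 + (\<Sum>i<n. (real (m i))\<^sup>2)) * (lq_norm q {..<m i} c)\<^sup>2"
      using power2_norm_sum_columns_le[of m i B q "{..<m i}" c] unit q \<open>i < n\<close>
      by (meson order_trans mult_right_mono zero_le_power2 order_refl)
  qed
  then have "S \<noteq> {}" by blast
  have sigma: "sigma_q q n m B = Inf S" by (simp add: sigma_q_def S_def)
  have "(norm (block_apply m B i c))\<^sup>2 \<le> (1 + sigma_q q n m B) * (lq_norm q {..<m i} c)\<^sup>2"
  proof (cases "lq_norm q {..<m i} c = 0")
    case True
    then have "\<forall>j<m i. c j = 0" using lq_norm_eq_0D[OF _ q, of "{..<m i}" c] by simp
    then show ?thesis using True by simp
  next
    case False
    then have pos: "0 < (lq_norm q {..<m i} c)\<^sup>2" by simp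
    have "(norm (block_apply m B i c))\<^sup>2 / (lq_norm q {..<m i} c)\<^sup>2 - 1 \<le> Inf S"
      using \<open>S \<noteq> {}\<close> pos i by (intro cInf_greatest) (auto simp: S_def field_simps)
    then show ?thesis using pos by (simp add: sigma field_simps)
  qed
  then have "norm (block_apply m B i c) \<le> sqrt ((1 + sigma_q q n m B) * (lq_norm q {..<m i} c)\<^sup>2)"
    by (rule real_le_rsqrt)
  then show ?thesis by (simp add: real_sqrt_mult lq_norm_nonneg)
qed

lemma sigma_q_nonneg:
  fixes B :: "nat \<Rightarrow> nat \<Rightarrow> real ^ 'd"
  assumes unit: "\<forall>i<n. \<forall>j<m i. norm (B i j) = 1" and q: "q > 0" and i: "i < n" "0 < m i"
  shows "0 \<le> sigma_q q n m B"
proof -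
  define u where "u (l :: nat) = (if l = 0 then 1 else 0 :: real)" for l
  have "block_apply m B i u = (\<Sum>j<m i. if j = 0 then B i j else 0)"
    by (rule sum.cong) (auto simp: u_def)
  also have "\<dots> = B i 0" using i by simp
  finally have "norm (block_apply m B i u) = 1" using unit i by simp
  moreover have "lq_norm q {..<m i} u = 1"
    unfolding u_def using i q by (intro lq_norm_unit_vector) auto
  ultimately have "1 \<le> sqrt (1 + sigma_q q n m B)"
    using norm_block_apply_le_sigma_q[OF unit q i(1), of u] by simp
  then show ?thesis by simp
qed

definition eps_submatrix :: "real \<Rightarrow> (nat \<Rightarrow> nat \<Rightarrow> real ^ 'd) \<Rightarrow> (nat \<Rightarrow> nat) \<Rightarrow> nat \<Rightarrow> real \<Rightarrow> nat set \<Rightarrow> bool"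
  where "eps_submatrix q B m i e J \<longleftrightarrow> J \<subseteq> {..<m i} \<and> card J = dim (block_span B m i)
     \<and> (\<forall>c :: nat \<Rightarrow> real. (\<Sum>j\<in>J. c j *\<^sub>R B i j) = 0 \<longrightarrow> (\<forall>j\<in>J. c j = 0))
     \<and> (\<forall>c :: nat \<Rightarrow> real.
          (1 - e) * (lq_norm q J c)\<^sup>2 \<le> (norm (\<Sum>j\<in>J. c j *\<^sub>R B i j))\<^sup>2
        \<and> (norm (\<Sum>j\<in>J. c j *\<^sub>R B i j))\<^sup>2 \<le> (1 + e) * (lq_norm q J c)\<^sup>2)"

lemma epsilon_q_eq_Inf: "epsilon_q q n m B = Inf {e. \<forall>i<n. \<exists>J. eps_submatrix q B m i e J}"
  by (simp add: epsilon_q_def eps_submatrix_def)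

lemma eps_submatrix_exists:
  fixes B :: "nat \<Rightarrow> nat \<Rightarrow> real ^ 'd"
  assumes unit: "\<forall>i<n. \<forall>j<m i. norm (B i j) = 1" and q: "q > 0"
  shows "\<exists>e. \<forall>i<n. \<exists>J. eps_submatrix q B m i e J"
proof -
  define e where "e = 1 + (\<Sum>i<n. (real (m i))\<^sup>2)"
  have "\<exists>J. eps_submatrix q B m i e J" if i: "i < n" for i
  proof -
    obtain J where J: "J \<subseteq> {..<m i}" "card J = dim (span (B i ` {..<m i}))"
        "\<forall>c. (\<Sum>j\<in>J. c j *\<^sub>R B i j) = 0 \<longrightarrow> (\<forall>j\<in>J. c j = 0)"
      using exists_independent_index_subset[of "{..<m i}" "B i"] by auto
    have "(1 - e) * (lq_norm q J c)\<^sup>2 \<le> (norm (\<Sum>j\<in>J. c j *\<^sub>R B i j))\<^sup>2" for c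
    proof -
      have "1 - e \<le> 0" by (simp add: e_def sum_nonneg)
      then show ?thesis by (meson mult_nonpos_nonneg order_trans zero_le_power2)
    qed
    moreover have "(norm (\<Sum>j\<in>J. c j *\<^sub>R B i j))\<^sup>2 \<le> (1 + e) * (lq_norm q J c)\<^sup>2" for c
    proof -
      have "(real (m i))\<^sup>2 \<le> 1 + e"
        using i member_le_sum[of i "{..<n}" "\<lambda>i. (real (m i))\<^sup>2"] by (simp add: e_def)
      then show ?thesis
        using power2_norm_sum_columns_le[of m i B q J c] unit i q J(1)
        by (meson order_trans mult_right_mono zero_le_power2)
    qed
    ultimately show "\<exists>J. eps_submatrix q B m i e J"
      using J by (auto simp: eps_submatrix_def block_span_def)
  qed
  then show ?thesis by blast
qed

lemma eps_submatrix_nonneg: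
  fixes B :: "nat \<Rightarrow> nat \<Rightarrow> real ^ 'd"
  assumes unit: "\<forall>j<m i. norm (B i j) = 1" and "0 < m i" "q > 0"
    and e: "eps_submatrix q B m i e J"
  shows "0 \<le> e"
proof -
  have J: "J \<subseteq> {..<m i}" "card J = dim (block_span B m i)"
    using e by (auto simp: eps_submatrix_def)
  then have "finite J" using finite_subset by blast
  have "B i 0 \<in> block_span B m i" "B i 0 \<noteq> 0"
    using assms by (auto simp: block_span_def intro: span_base)
  then have "dim (block_span B m i) \<noteq> 0" by (metis dim_eq_0 singletonD subsetD)
  then obtain j where j: "j \<in> J" using J(2) by (metis card.empty ex_in_conv)
  define c where "c (l :: nat) = (if l = j then 1 else 0 :: real)" for l
  have "(\<Sum>l\<in>J. c l *\<^sub>R B i l) = (\<Sum>l\<in>J. if l = j then B i l else 0)"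
    by (rule sum.cong) (auto simp: c_def)
  also have "\<dots> = B i j" using \<open>finite J\<close> j by simp
  finally have "norm (\<Sum>l\<in>J. c l *\<^sub>R B i l) = 1" using unit J(1) j by auto
  moreover have "lq_norm q J c = 1"
    unfolding c_def using \<open>finite J\<close> j \<open>q > 0\<close> by (rule lq_norm_unit_vector)
  moreover have "(norm (\<Sum>l\<in>J. c l *\<^sub>R B i l))\<^sup>2 \<le> (1 + e) * (lq_norm q J c)\<^sup>2"
    using e unfolding eps_submatrix_def by blast
  ultimately show ?thesis by simp
qed

lemma epsilon_q_nonneg:
  fixes B :: "nat \<Rightarrow> nat \<Rightarrow> real ^ 'd"
  assumes unit: "\<forall>i<n. \<forall>j<m i. norm (B i j) = 1" and q: "q > 0" and i: "i < n" "0 < m i"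
  shows "0 \<le> epsilon_q q n m B"
  unfolding epsilon_q_eq_Inf
proof (rule cInf_greatest)
  show "{e. \<forall>i<n. \<exists>J. eps_submatrix q B m i e J} \<noteq> {}"
    using eps_submatrix_exists[OF unit q] by auto
  fix e assume "e \<in> {e. \<forall>i<n. \<exists>J. eps_submatrix q B m i e J}"
  then obtain J where "eps_submatrix q B m i e J" using i by auto
  then show "0 \<le> e" using unit i q by (intro eps_submatrix_nonneg) auto
qed

lemma epsilon_q_approx:
  fixes B :: "nat \<Rightarrow> nat \<Rightarrow> real ^ 'd"
  assumes unit: "\<forall>i<n. \<forall>j<m i. norm (B i j) = 1" and q: "q > 0"
    and a: "0 \<le> a" "a < sqrt (1 - epsilon_q q n m B)"
  obtains e where "\<forall>i<n. \<exists>J. eps_submatrix q B m i e J" "a < sqrt (1 - e)"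
proof -
  have "a\<^sup>2 < 1 - epsilon_q q n m B"
    using a real_le_lsqrt[of a "1 - epsilon_q q n m B"] by (meson not_le)
  then have "epsilon_q q n m B < 1 - a\<^sup>2" by simp
  then obtain e where "\<forall>i<n. \<exists>J. eps_submatrix q B m i e J" "e < 1 - a\<^sup>2"
    using cInf_lessD[of "{e. \<forall>i<n. \<exists>J. eps_submatrix q B m i e J}"] eps_submatrix_exists[OF unit q]
    unfolding epsilon_q_eq_Inf by blast
  moreover from this(2) have "a < sqrt (1 - e)" by (intro real_less_rsqrt) simp
  ultimately show ?thesis using that by blast
qed

lemma eps_submatrix_coefficients:
  fixes B :: "nat \<Rightarrow> nat \<Rightarrow> real ^ 'd"
  assumes e: "eps_submatrix q B m i e J" and x: "x \<in> block_span B m i"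
  obtains g where "block_apply m B i g = x" "sqrt (1 - e) * lq_norm q {..<m i} g \<le> norm x"
proof -
  have J: "J \<subseteq> {..<m i}" "card J = dim (span (B i ` {..<m i}))"
      "\<forall>c. (\<Sum>j\<in>J. c j *\<^sub>R B i j) = 0 \<longrightarrow> (\<forall>j\<in>J. c j = 0)"
    using e by (auto simp: eps_submatrix_def block_span_def)
  then have "finite J" using finite_subset by blast
  obtain h where h: "(\<Sum>j\<in>J. h j *\<^sub>R B i j) = x"
    using spanned_by_independent_index_subset[OF \<open>finite J\<close> J] x unfolding block_span_def by blast
  define g where "g j = (if j \<in> J then h j else 0)" for j
  have "block_apply m B i g = (\<Sum>j\<in>J. h j *\<^sub>R B i j)"
    using J(1) by (intro sum.mono_neutral_cong_right) (auto simp: g_def)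
  then have g: "block_apply m B i g = x" using h by simp
  have "lq_norm q {..<m i} g = lq_norm q J h"
    unfolding g_def using J(1) by (intro lq_norm_extend_zero) auto
  moreover have "sqrt (1 - e) * lq_norm q J h \<le> norm x"
  proof -
    have "(1 - e) * (lq_norm q J h)\<^sup>2 \<le> (norm x)\<^sup>2"
      using e h by (auto simp: eps_submatrix_def)
    then have "sqrt ((1 - e) * (lq_norm q J h)\<^sup>2) \<le> norm x"
      using real_sqrt_le_mono by fastforce
    then show ?thesis by (simp add: real_sqrt_mult lq_norm_nonneg)
  qed
  ultimately have "sqrt (1 - e) * lq_norm q {..<m i} g \<le> norm x" by simp
  with g show ?thesis by (rule that)
qed

text \<open>Re-expanding the residuals \<open>s i - B[i]c[i]\<close> on the support and dropping the off-support blocks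
  yields a feasible competitor, so optimality bounds the off-support cost by the residuals.\<close>
lemma lq_l1_optimal_off_support_cost_le:
  fixes B :: "nat \<Rightarrow> nat \<Rightarrow> real ^ 'd"
  assumes q: "q \<ge> 1" and \<Lambda>: "\<Lambda> \<subseteq> {..<n}" and \<alpha>: "0 \<le> \<alpha>"
    and s: "\<forall>i\<in>\<Lambda>. s i \<in> block_span B m i"
    and opt: "lq_l1_optimal q n m B (\<Sum>i\<in>\<Lambda>. s i) c"
    and lower: "\<And>i x. i \<in> \<Lambda> \<Longrightarrow> x \<in> block_span B m i \<Longrightarrow>
                  \<exists>g. block_apply m B i g = x \<and> \<alpha> * lq_norm q {..<m i} g \<le> norm x"
  shows "\<alpha> * (\<Sum>i\<in>{..<n} - \<Lambda>. lq_norm q {..<m i} (c i))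
           \<le> (\<Sum>i\<in>\<Lambda>. norm (s i - block_apply m B i (c i)))"
proof -
  define L where "L i = lq_norm q {..<m i} (c i)" for i
  define r where "r i = s i - block_apply m B i (c i)" for i
  have "r i \<in> block_span B m i" if "i \<in> \<Lambda>" for i
    using s that unfolding r_def by (simp add: diff_block_apply_in_block_span)
  then have "\<forall>i\<in>\<Lambda>. \<exists>g. block_apply m B i g = r i \<and> \<alpha> * lq_norm q {..<m i} g \<le> norm (r i)"
    using lower by blast
  from bchoice[OF this] obtain g where
    "\<forall>i\<in>\<Lambda>. block_apply m B i (g i) = r i \<and> \<alpha> * lq_norm q {..<m i} (g i) \<le> norm (r i)" ..
  then have g: "\<And>i. i \<in> \<Lambda> \<Longrightarrow> block_apply m B i (g i) = r i"
      "\<And>i. i \<in> \<Lambda> \<Longrightarrow> \<alpha> * lq_norm q {..<m i} (g i) \<le> norm (r i)"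
    by auto
  define c' where "c' i = (if i \<in> \<Lambda> then (\<lambda>j. c i j + g i j) else (\<lambda>_. 0))" for i
  have "dict_apply n m B c' = (\<Sum>i<n. if i \<in> \<Lambda> then s i else 0)"
    unfolding dict_apply_def
    by (rule sum.cong) (auto simp: c'_def g r_def scaleR_add_left sum.distrib)
  also have "\<dots> = (\<Sum>i\<in>\<Lambda>. s i)"
    using \<Lambda> by (simp add: sum.inter_restrict[symmetric] Int_absorb1)
  finally have "(\<Sum>i<n. L i) \<le> (\<Sum>i<n. lq_norm q {..<m i} (c' i))"
    using opt unfolding lq_l1_optimal_def L_def by blast
  also have "\<dots> \<le> (\<Sum>i<n. if i \<in> \<Lambda> then L i + lq_norm q {..<m i} (g i) else 0)"
    using q by (intro sum_mono) (auto simp: c'_def L_def lq_norm_triangle lq_norm_def[where c = "\<lambda>_. 0"])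
  also have "\<dots> = (\<Sum>i\<in>\<Lambda>. L i) + (\<Sum>i\<in>\<Lambda>. lq_norm q {..<m i} (g i))"
    using \<Lambda> by (simp add: sum.inter_restrict[symmetric] Int_absorb1 sum.distrib)
  finally have "(\<Sum>i\<in>{..<n} - \<Lambda>. L i) \<le> (\<Sum>i\<in>\<Lambda>. lq_norm q {..<m i} (g i))"
    using sum.subset_diff[OF \<Lambda>, of L] by simp
  then have "\<alpha> * (\<Sum>i\<in>{..<n} - \<Lambda>. L i) \<le> (\<Sum>i\<in>\<Lambda>. \<alpha> * lq_norm q {..<m i} (g i))"
    using mult_left_mono[OF _ \<alpha>] by (simp add: sum_distrib_left[symmetric])
  also have "\<dots> \<le> (\<Sum>i\<in>\<Lambda>. norm (r i))"
    by (intro sum_mono g(2))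
  finally show ?thesis unfolding L_def r_def .
qed

lemma residual_sum_le_off_support_cost:
  fixes B :: "nat \<Rightarrow> nat \<Rightarrow> real ^ 'd"
  assumes \<Lambda>: "\<Lambda> \<subseteq> {..<n}" and s: "\<forall>i\<in>\<Lambda>. s i \<in> block_span B m i"
    and y: "dict_apply n m B c = (\<Sum>i\<in>\<Lambda>. s i)"
    and coherence: "\<And>i j x z. i < n \<Longrightarrow> j < n \<Longrightarrow> i \<noteq> j \<Longrightarrow> x \<in> block_span B m i \<Longrightarrow>
                      z \<in> block_span B m j \<Longrightarrow> \<bar>x \<bullet> z\<bar> \<le> \<mu> * norm x * norm z"
    and upper: "\<And>i d. i < n \<Longrightarrow> norm (block_apply m B i d) \<le> \<beta> * lq_norm q {..<m i} d"
    and \<mu>: "0 \<le> \<mu>"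
  shows "(\<Sum>i\<in>\<Lambda>. norm (s i - block_apply m B i (c i))) * (1 - (real (card \<Lambda>) - 1) * \<mu>)
           \<le> real (card \<Lambda>) * \<mu> * \<beta> * (\<Sum>i\<in>{..<n} - \<Lambda>. lq_norm q {..<m i} (c i))"
proof -
  define t r where "t i = block_apply m B i (c i)" and "r i = s i - t i" for i
  define \<Gamma> where "\<Gamma> = {..<n} - \<Lambda>"
  have "finite \<Lambda>" using \<Lambda> finite_subset by blast
  have r_span: "r i \<in> block_span B m i" if "i \<in> \<Lambda>" for i
    using s that unfolding r_def t_def by (simp add: diff_block_apply_in_block_span)
  have "(\<Sum>i\<in>\<Gamma>. t i) + (\<Sum>i\<in>\<Lambda>. t i) = (\<Sum>i\<in>\<Lambda>. s i)"
    using y sum.subset_diff[OF \<Lambda>, of t] by (simp add: \<Gamma>_def t_def dict_apply_def)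
  then have "(\<Sum>i\<in>\<Lambda>. r i) = (\<Sum>j\<in>\<Gamma>. t j)"
    by (simp add: r_def sum_subtractf algebra_simps)
  then have "(\<Sum>i\<in>\<Lambda>. norm (r i)) * (1 - (real (card \<Lambda>) - 1) * \<mu>)
               \<le> real (card \<Lambda>) * \<mu> * (\<Sum>j\<in>\<Gamma>. norm (t j))"
  proof (rule sum_norm_le_coherence_leakage[OF \<open>finite \<Lambda>\<close> _ \<mu>])
    show "\<bar>r i \<bullet> r l\<bar> \<le> \<mu> * norm (r i) * norm (r l)" if "i \<in> \<Lambda>" "l \<in> \<Lambda>" "i \<noteq> l" for i l
      using that \<Lambda> r_span by (intro coherence[of i l]) auto
    show "\<bar>r i \<bullet> t j\<bar> \<le> \<mu> * norm (r i) * norm (t j)" if "i \<in> \<Lambda>" "j \<in> \<Gamma>" for i j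
      using that \<Lambda> r_span unfolding \<Gamma>_def t_def
      by (intro coherence[of i j] block_apply_in_block_span) auto
  qed
  also have "\<dots> \<le> real (card \<Lambda>) * \<mu> * (\<beta> * (\<Sum>j\<in>\<Gamma>. lq_norm q {..<m j} (c j)))"
  proof (rule mult_left_mono)
    have "norm (t j) \<le> \<beta> * lq_norm q {..<m j} (c j)" if "j \<in> \<Gamma>" for j
      using that upper[of j "c j"] unfolding \<Gamma>_def t_def by simp
    then show "(\<Sum>j\<in>\<Gamma>. norm (t j)) \<le> \<beta> * (\<Sum>j\<in>\<Gamma>. lq_norm q {..<m j} (c j))"
      unfolding sum_distrib_left by (rule sum_mono)
  qed (use \<mu> in simp)
  finally show ?thesis by (simp add: r_def t_def \<Gamma>_def ac_simps)
qed

lemma lq_l1_optimal_vanishes_off_support: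
  fixes B :: "nat \<Rightarrow> nat \<Rightarrow> real ^ 'd"
  assumes q: "q \<ge> 1" and \<Lambda>: "\<Lambda> \<subseteq> {..<n}"
    and s: "\<forall>i\<in>\<Lambda>. s i \<in> block_span B m i" and opt: "lq_l1_optimal q n m B (\<Sum>i\<in>\<Lambda>. s i) c"
    and coherence: "\<And>i j x z. i < n \<Longrightarrow> j < n \<Longrightarrow> i \<noteq> j \<Longrightarrow> x \<in> block_span B m i \<Longrightarrow>
                      z \<in> block_span B m j \<Longrightarrow> \<bar>x \<bullet> z\<bar> \<le> \<mu> * norm x * norm z"
    and upper: "\<And>i d. i < n \<Longrightarrow> norm (block_apply m B i d) \<le> \<beta> * lq_norm q {..<m i} d"
    and lower: "\<And>i x. i \<in> \<Lambda> \<Longrightarrow> x \<in> block_span B m i \<Longrightarrow>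
                  \<exists>g. block_apply m B i g = x \<and> \<alpha> * lq_norm q {..<m i} g \<le> norm x"
    and \<mu>: "0 \<le> \<mu>" and \<beta>: "0 \<le> \<beta>" and pos: "0 < 1 - (real (card \<Lambda>) - 1) * \<mu>"
    and cond: "real (card \<Lambda>) * \<mu> * \<beta> / (1 - (real (card \<Lambda>) - 1) * \<mu>) < \<alpha>"
    and i: "i < n" "i \<notin> \<Lambda>" and j: "j < m i"
  shows "c i j = 0"
proof -
  define L where "L i = lq_norm q {..<m i} (c i)" for i
  define C S where "C = (\<Sum>i\<in>{..<n} - \<Lambda>. L i)"
    and "S = (\<Sum>i\<in>\<Lambda>. norm (s i - block_apply m B i (c i)))"
  define k d where "k = real (card \<Lambda>)" and "d = 1 - (real (card \<Lambda>) - 1) * \<mu>"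
  have "k * \<mu> * \<beta> < \<alpha> * d" "0 < d"
    using cond pos by (simp_all add: k_def d_def divide_less_eq)
  moreover have "0 \<le> k * \<mu> * \<beta>" using \<mu> \<beta> by (simp add: k_def)
  ultimately have "0 < \<alpha> * d" by linarith
  with \<open>0 < d\<close> have "0 \<le> \<alpha>" by (simp add: zero_less_mult_iff)
  have "\<alpha> * C \<le> S"
    using lq_l1_optimal_off_support_cost_le[OF q \<Lambda> \<open>0 \<le> \<alpha>\<close> s opt lower] unfolding C_def S_def L_def .
  then have "\<alpha> * C * d \<le> S * d"
    using \<open>0 < d\<close> by (simp add: mult_right_mono)
  also have "\<dots> \<le> k * \<mu> * \<beta> * C"
    unfolding S_def C_def L_def k_def d_def
    by (rule residual_sum_le_off_support_cost[OF \<Lambda> s _ coherence upper \<mu>])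
       (use opt in \<open>simp add: lq_l1_optimal_def\<close>)
  finally have "(\<alpha> * d) * C \<le> (k * \<mu> * \<beta>) * C" by (simp add: ac_simps)
  moreover have "0 \<le> C" unfolding C_def L_def by (simp add: sum_nonneg lq_norm_nonneg)
  ultimately have "C = 0"
    using \<open>k * \<mu> * \<beta> < \<alpha> * d\<close> mult_le_cancel_right_pos[of C "\<alpha> * d" "k * \<mu> * \<beta>"] by linarith
  then have "L i = 0"
    using i by (simp add: C_def sum_nonneg_eq_0_iff L_def lq_norm_nonneg)
  then show ?thesis
    using lq_norm_eq_0D[of "{..<m i}" q "c i" j] q j by (simp add: L_def)
qed

theorem corollary2:
  fixes q :: real and n k :: nat and m :: "nat \<Rightarrow> nat" and B :: "nat \<Rightarrow> nat \<Rightarrow> real ^ 'd"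
  assumes q: "q \<ge> 1"
    and k: "0 < k" "k < n"
    and m_pos: "\<forall>i<n. 0 < m i"
    and unit: "\<forall>i<n. \<forall>j<m i. norm (B i j) = 1"
    and indep: "\<forall>i<n. \<forall>j<n. i \<noteq> j \<longrightarrow> block_span B m i \<inter> block_span B m j = {0}"
    and uniq: "unique_kbs n m B k"
    and cond: "(real k * sqrt ((1 + sigma_q q n m B) / (1 + epsilon_q q n m B)) + real k - 1)
                 * mutual_subspace_coherence n m B
               < (1 - epsilon_q q n m B) / (1 + epsilon_q q n m B)"
  shows "\<forall>\<Lambda> y c. \<Lambda> \<subseteq> {..<n} \<and> card \<Lambda> = k
            \<and> y \<in> {\<Sum>i\<in>\<Lambda>. s i | s. \<forall>i\<in>\<Lambda>. s i \<in> block_span B m i}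
            \<and> lq_l1_optimal q n m B y c
            \<longrightarrow> (\<forall>i<n. i \<notin> \<Lambda> \<longrightarrow> (\<forall>j<m i. c i j = 0))"
proof (intro allI impI)
  fix \<Lambda> y c i j
  assume "\<Lambda> \<subseteq> {..<n} \<and> card \<Lambda> = k \<and> y \<in> {\<Sum>i\<in>\<Lambda>. s i | s. \<forall>i\<in>\<Lambda>. s i \<in> block_span B m i}
            \<and> lq_l1_optimal q n m B y c" and i: "i < n" "i \<notin> \<Lambda>" and j: "j < m i"
  then obtain s where \<Lambda>: "\<Lambda> \<subseteq> {..<n}" "card \<Lambda> = k" and s: "\<forall>i\<in>\<Lambda>. s i \<in> block_span B m i"
    and opt: "lq_l1_optimal q n m B (\<Sum>i\<in>\<Lambda>. s i) c" by blast
  define \<sigma> \<epsilon> \<mu> where "\<sigma> = sigma_q q n m B" and "\<epsilon> = epsilon_q q n m B"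
    and "\<mu> = mutual_subspace_coherence n m B"
  have "0 < q" "0 < m 0" "1 < n" using q k m_pos by auto
  then have "0 \<le> \<sigma>" "0 \<le> \<epsilon>" "0 \<le> \<mu>" unfolding \<sigma>_def \<epsilon>_def \<mu>_def
    using sigma_q_nonneg epsilon_q_nonneg mutual_subspace_coherence_nonneg m_pos unit by blast+
  then have pos: "0 < 1 - (real k - 1) * \<mu>"
    and bound: "real k * \<mu> * sqrt (1 + \<sigma>) / (1 - (real k - 1) * \<mu>) < sqrt (1 - \<epsilon>)"
    using recovery_condition_rearranged[of \<epsilon> \<sigma> \<mu> "real k"] cond k unfolding \<sigma>_def \<epsilon>_def \<mu>_def by auto
  obtain e where e: "\<forall>i<n. \<exists>J. eps_submatrix q B m i e J"
    and e_bound: "real k * \<mu> * sqrt (1 + \<sigma>) / (1 - (real k - 1) * \<mu>) < sqrt (1 - e)"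
    using epsilon_q_approx[OF unit \<open>0 < q\<close> _ bound[unfolded \<epsilon>_def]] pos \<open>0 \<le> \<mu>\<close> \<open>0 \<le> \<sigma>\<close> by auto
  have lower: "\<exists>g. block_apply m B i g = x \<and> sqrt (1 - e) * lq_norm q {..<m i} g \<le> norm x"
    if "i \<in> \<Lambda>" "x \<in> block_span B m i" for i x
    using e \<Lambda> that eps_submatrix_coefficients by (metis lessThan_iff subsetD)
  show "c i j = 0"
  proof (rule lq_l1_optimal_vanishes_off_support[where \<beta> = "sqrt (1 + \<sigma>)",
        OF q \<Lambda>(1) s opt _ _ lower \<open>0 \<le> \<mu>\<close> _ _ _ i j])
    show "\<bar>x \<bullet> z\<bar> \<le> \<mu> * norm x * norm z"
      if "i < n" "j < n" "i \<noteq> j" "x \<in> block_span B m i" "z \<in> block_span B m j" for i j x z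
      unfolding \<mu>_def using that by (rule abs_inner_le_coherence)
    show "norm (block_apply m B i d) \<le> sqrt (1 + \<sigma>) * lq_norm q {..<m i} d" if "i < n" for i d
      unfolding \<sigma>_def using unit \<open>0 < q\<close> that by (rule norm_block_apply_le_sigma_q)
  qed (use \<open>0 \<le> \<sigma>\<close> pos e_bound \<Lambda>(2) in auto)
qed

end
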